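(* Assume (H1), (H2)(i) and (H2)(ii) described in the context, and set $l:=h+k$. Then for every $\sigma>0$ there is a constant $C_\sigma>0$ such that $$|H(x,s,t)|\le l(x)\big[\sigma(\Phi(s)+\Psi(t))+C_\sigma\big]\quad\text{for all }(x,s,t)\in\mathbb{R}^N\times(0,+\infty)^2.$$
   Context: Notation: $N\ge2$, $\mathbb{R}_+=(0,+\infty)$. A Young function is a convex $\Lambda:[0,\infty)\to[0,\infty)$ with $\Lambda(t)=0$ iff $t=0$, $\lim_{t\to0^+}\Lambda(t)/t=0$, $\lim_{t\to\infty}\Lambda(t)/t=\infty$; $\overline{\Lambda}(t)=\max_{s\ge0}\{st-\Lambda(s)\}$; for differentiable $\Lambda$, $s_\Lambda=\sup_{t>0}t\Lambda'(t)/\Lambda(t)$. $\Lambda_1\ll\Lambda_2$ means $\lim_{t\to\infty}\Lambda_1(t)/\Lambda_2(\eta t)=0$ for every $\eta>0$. Setting: $\Phi,\Psi$ Young functions, $\phi=\Phi'$, $\psi=\Psi'$; $f,g:\mathbb{R}_+\times\mathbb{R}_+\to\mathbb{R}_+$ continuous; $h,k:\mathbb{R}^N\to\mathbb{R}_+$ measurable. (H1) $\Phi,\Psi$ are $C^2$, $0<\inf_{t>0}\frac{t\phi'(t)}{\phi(t)}\le\sup_{t>0}\frac{t\phi'(t)}{\phi(t)}<\infty$, the same for $\psi$, and $\max\{s_\Phi,s_\Psi\}<N$. (H2)(i) $H:\mathbb{R}^N\times\mathbb{R}_+\times\mathbb{R}_+\to\mathbb{R}$ is measurable in $x$, $C^1$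 in $(s,t)$, with $\partial_sH(x,s,t)=h(x)f(s,t)$, $\partial_tH(x,s,t)=k(x)g(s,t)$, $H(\cdot,0,0)\equiv0$. (H2)(ii) There are differentiable Young functions $\Upsilon_1,\Upsilon_2,\Gamma_1,\Gamma_2$ with $\Upsilon_1\ll\Phi$, $\Gamma_2\ll\Psi$, constants $C>0$, $\alpha,\beta\in(0,1)$ such that for all $s,t>0$: $f(s,t)\le C[(s^{-\alpha}+1)(\Upsilon_2(t)/t+1)+\Upsilon_1(s)/s]$, $g(s,t)\le C[(t^{-\beta}+1)(\Gamma_1(s)/s+1)+\Gamma_2(t)/t]$; and $\overline{\Phi}\ll\Psi\circ\Upsilon_2^{-1}\circ\overline{\Upsilon}_2$, $\overline{\Psi}\ll\Phi\circ\Gamma_1^{-1}\circ\overline{\Gamma}_1$. *)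

theory Defs
  imports "HOL-Analysis.Analysis"
begin

text \<open>Young function (only its values on [0,infinity) matter).\<close>
definition young :: "(real \<Rightarrow> real) \<Rightarrow> bool" where
  "young \<Lambda> \<longleftrightarrow>
     convex_on {0..} \<Lambda> \<and>
     (\<forall>t\<ge>0. \<Lambda> t \<ge> 0) \<and>
     (\<forall>t\<ge>0. \<Lambda> t = 0 \<longleftrightarrow> t = 0) \<and>
     ((\<lambda>t. \<Lambda> t / t) \<longlongrightarrow> 0) (at_right 0) \<and>
     filterlim (\<lambda>t. \<Lambda> t / t) at_top at_top"

definition young_conj :: "(real \<Rightarrow> real) \<Rightarrow> real \<Rightarrow> real" where
  "young_conj \<Lambda> t = (SUP s\<in>{0..}. s * t - \<Lambda> s)"

definition young_inv :: "(real \<Rightarrow> real) \<Rightarrow> real \<Rightarrow> real" where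
  "young_inv \<Lambda> y = (THE t. 0 \<le> t \<and> \<Lambda> t = y)"

definition s_index :: "(real \<Rightarrow> real) \<Rightarrow> real" where
  "s_index \<Lambda> = (SUP t\<in>{0<..}. t * deriv \<Lambda> t / \<Lambda> t)"

definition ll :: "(real \<Rightarrow> real) \<Rightarrow> (real \<Rightarrow> real) \<Rightarrow> bool" where
  "ll \<Lambda>1 \<Lambda>2 \<longleftrightarrow> (\<forall>\<eta>>0. ((\<lambda>t. \<Lambda>1 t / \<Lambda>2 (\<eta> * t)) \<longlongrightarrow> 0) at_top)"

definition C2_pos :: "(real \<Rightarrow> real) \<Rightarrow> (real \<Rightarrow> real) \<Rightarrow> bool" where
  "C2_pos \<Lambda> lam \<longleftrightarrow>
     (\<forall>t>0. (\<Lambda> has_real_derivative lam t) (at t)) \<and>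
     (\<exists>lam'. (\<forall>t>0. (lam has_real_derivative lam' t) (at t)) \<and> continuous_on {0<..} lam')"

definition index_bounds :: "(real \<Rightarrow> real) \<Rightarrow> bool" where
  "index_bounds lam \<longleftrightarrow>
     (\<exists>a b. 0 < a \<and> (\<forall>t>0. a \<le> t * deriv lam t / lam t \<and> t * deriv lam t / lam t \<le> b))"

end

theory Submission
  imports Defs
begin

text \<open>Both partial derivatives of \<open>H\<close> are positive and \<open>H\<close> tends to \<open>0\<close> at the
  corner \<open>(0, 0)\<close>, so \<open>H(x,s,t)\<close> is the limit, as \<open>\<epsilon>\<close> tends to \<open>0\<close>, of the sum
  of the increments \<open>H(x,s,\<epsilon>) - H(x,\<epsilon>,\<epsilon>)\<close> and \<open>H(x,s,t) - H(x,s,\<epsilon>)\<close>.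
  Both are nonnegative, and integrating the growth bounds on \<open>f\<close> and \<open>g\<close> along the two
  segments bounds them by \<open>h(x) A(s)\<close> and \<open>k(x) B(s,t)\<close>, where \<open>A\<close> and \<open>B\<close> are
  dominated by combinations of \<open>1\<close>, \<open>s\<close>, \<open>t\<close>, \<open>\<Upsilon>1(s)\<close>, \<open>\<Gamma>2(t)\<close>,
  \<open>\<Gamma>1(s)/s\<close> and \<open>\<Gamma>1(s) t / s\<close>. Each of these is at most
  \<open>\<sigma>(\<Phi>(s) + \<Psi>(t)) + C\<^sub>\<sigma>\<close> for every \<open>\<sigma> > 0\<close>: \<open>s\<close> and \<open>t\<close> because Young
  functions are superlinear, \<open>\<Upsilon>1\<close> and \<open>\<Gamma>2\<close> because \<open>\<Upsilon>1 \<lless> \<Phi>\<close> and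
  \<open>\<Gamma>2 \<lless> \<Psi>\<close>, and the mixed term by Young's inequality for \<open>\<Psi>\<close> combined with the
  growth condition on the conjugate of \<open>\<Psi>\<close>.\<close>

section \<open>Young functions\<close>

lemma young_zero: "young L \<Longrightarrow> L 0 = 0"
  unfolding young_def by auto

lemma young_nonneg: "young L \<Longrightarrow> 0 \<le> x \<Longrightarrow> 0 \<le> L x"
  unfolding young_def by auto

lemma young_pos: "young L \<Longrightarrow> 0 < x \<Longrightarrow> 0 < L x"
  unfolding young_def by (metis less_eq_real_def)

lemma young_mult_le:
  assumes "young L" "0 \<le> e" "e \<le> 1" "0 \<le> y"
  shows "L (e * y) \<le> e * L y"
proof -
  have "convex_on {0..} L" using assms(1) unfolding young_def by auto
  then have "L ((1 - e) *\<^sub>R 0 + e *\<^sub>R y) \<le> (1 - e) * L 0 + e * L y"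
    by (rule convex_onD) (use assms in auto)
  then show ?thesis using young_zero[OF assms(1)] by simp
qed

lemma young_ratio_mono:
  assumes "young L" "0 < x" "x \<le> y"
  shows "L x / x \<le> L y / y"
proof -
  have "L ((x / y) * y) \<le> (x / y) * L y"
    by (rule young_mult_le) (use assms in auto)
  then show ?thesis using assms by (simp add: field_simps)
qed

lemma young_strict_mono:
  assumes "young L" "0 \<le> x" "x < y"
  shows "L x < L y"
proof -
  have "L ((x / y) * y) \<le> (x / y) * L y"
    by (rule young_mult_le) (use assms in auto)
  also have "\<dots> < L y"
    using young_pos[OF assms(1), of y] assms by (auto simp: field_simps)
  finally show ?thesis using assms by simp
qed

lemma young_mono: "young L \<Longrightarrow> 0 \<le> x \<Longrightarrow> x \<le> y \<Longrightarrow> L x \<le> L y"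
  using young_strict_mono by (metis order_le_less)

lemma young_continuous_on: "young L \<Longrightarrow> continuous_on {0<..} L"
  unfolding young_def
  by (intro convex_on_continuous) (auto elim: convex_on_subset simp: open_greaterThan)

lemma young_tendsto_zero:
  assumes "young L"
  shows "(L \<longlongrightarrow> 0) (at_right 0)"
proof -
  have "((\<lambda>t. L t / t * t) \<longlongrightarrow> 0 * 0) (at_right 0)"
    using assms unfolding young_def by (intro tendsto_mult tendsto_ident_at) auto
  moreover have "eventually (\<lambda>t. L t / t * t = L t) (at_right (0::real))"
    using eventually_at_right_less[of 0] by eventually_elim simp
  ultimately show ?thesis by (simp add: tendsto_cong)
qed

lemma young_superlinear:
  assumes "young L" "0 < \<sigma>"
  shows "\<exists>K. \<forall>s\<ge>0. s \<le> \<sigma> * L s + K"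
proof -
  have "filterlim (\<lambda>t. L t / t) at_top at_top" using assms(1) unfolding young_def by auto
  then have "eventually (\<lambda>t. 1 / \<sigma> \<le> L t / t) at_top" by (simp add: filterlim_at_top)
  then obtain M where M: "\<And>t. M \<le> t \<Longrightarrow> 1 / \<sigma> \<le> L t / t"
    by (auto simp: eventually_at_top_linorder)
  have "s \<le> \<sigma> * L s + max M 1" if "0 \<le> s" for s
  proof (cases "max M 1 \<le> s")
    case True
    then show ?thesis using M[of s] assms(2) by (simp add: field_simps)
  next
    case False
    have "0 \<le> \<sigma> * L s" using young_nonneg[OF assms(1) that] assms(2) by simp
    then show ?thesis using False by linarith
  qed
  then show ?thesis by blast
qed

lemma ll_imp_bound:
  assumes "young U" "young L" "ll U L" "0 < \<sigma>"
  shows "\<exists>K. \<forall>s>0. U s \<le> \<sigma> * L s + K"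
proof -
  have "((\<lambda>t. U t / L t) \<longlongrightarrow> 0) at_top"
    using assms(3)[unfolded ll_def, rule_format, of 1] by simp
  then have "eventually (\<lambda>t. U t / L t < \<sigma>) at_top"
    using assms(4) by (rule order_tendstoD)
  then obtain M where M: "\<And>t. M \<le> t \<Longrightarrow> U t / L t < \<sigma>"
    by (auto simp: eventually_at_top_linorder)
  have "U s \<le> \<sigma> * L s + U (max M 1)" if "0 < s" for s
  proof (cases "max M 1 \<le> s")
    case True
    then have "U s \<le> \<sigma> * L s"
      using M[of s] young_pos[OF assms(2) that] by (simp add: field_simps)
    moreover have "0 \<le> U (max M 1)" by (rule young_nonneg[OF assms(1)]) simp
    ultimately show ?thesis by linarith
  next
    case False
    then have "U s \<le> U (max M 1)" using that by (intro young_mono[OF assms(1)]) auto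
    moreover have "0 \<le> \<sigma> * L s" using young_nonneg[OF assms(2), of s] that assms(4) by simp
    ultimately show ?thesis by linarith
  qed
  then show ?thesis by blast
qed

lemma young_attains:
  assumes "young L" "0 \<le> y" "y \<le> L s" "0 \<le> s"
  shows "\<exists>t. 0 \<le> t \<and> t \<le> s \<and> L t = y"
proof (cases "y = 0")
  case True
  then show ?thesis using young_zero[OF assms(1)] assms(4) by blast
next
  case False
  then have "0 < y" using assms(2) by simp
  then have "s \<noteq> 0" using assms young_zero[OF assms(1)] by auto
  then have "0 < s" using assms(4) by simp
  have "eventually (\<lambda>r. L r < y \<and> 0 < r \<and> r < s) (at_right 0)"
    using order_tendstoD(2)[OF young_tendsto_zero[OF assms(1)] \<open>0 < y\<close>]
      eventually_at_right_real[OF \<open>0 < s\<close>]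
    by eventually_elim auto
  then obtain r where r: "L r < y" "0 < r" "r < s"
    using eventually_happens'[OF trivial_limit_at_right_real] by blast
  have "continuous_on {r..s} L"
    using young_continuous_on[OF assms(1)] by (rule continuous_on_subset) (use r in auto)
  then obtain t where "r \<le> t" "t \<le> s" "L t = y"
    using IVT'[of L r y s] r assms(3) by auto
  then show ?thesis using r(2) by (intro exI[of _ t]) auto
qed

lemma young_inv_eqI:
  assumes "young L" "0 \<le> t" "L t = y"
  shows "young_inv L y = t"
  unfolding young_inv_def
proof (rule the_equality)
  fix t' assume "0 \<le> t' \<and> L t' = y"
  then show "t' = t"
    using young_strict_mono[OF assms(1), of t t'] young_strict_mono[OF assms(1), of t' t] assms
    by (cases t t' rule: linorder_cases) auto
qed (use assms in auto)

lemma young_conj_bdd: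
  assumes "young L"
  shows "bdd_above ((\<lambda>s. s * u - L s) ` {0..})"
proof -
  have "0 < 1 / (\<bar>u\<bar> + 1)" by (simp add: add_nonneg_pos)
  then obtain K where K: "\<forall>s\<ge>0. s \<le> 1 / (\<bar>u\<bar> + 1) * L s + K"
    using young_superlinear[OF assms] by blast
  have "s * u - L s \<le> (\<bar>u\<bar> + 1) * K" if "0 \<le> s" for s
  proof -
    have "s * u \<le> s * \<bar>u\<bar>" using that by (simp add: mult_left_mono)
    moreover have "(\<bar>u\<bar> + 1) * s \<le> L s + (\<bar>u\<bar> + 1) * K"
      using K that by (simp add: field_simps add_pos_nonneg)
    ultimately show ?thesis using that by (simp add: algebra_simps)
  qed
  then show ?thesis by (intro bdd_aboveI[where M = "(\<bar>u\<bar> + 1) * K"]) auto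
qed

lemma young_conj_upper: "young L \<Longrightarrow> 0 \<le> r \<Longrightarrow> r * u - L r \<le> young_conj L u"
  unfolding young_conj_def by (rule cSUP_upper[OF _ young_conj_bdd]) auto

lemma young_conj_least: "(\<And>r. 0 \<le> r \<Longrightarrow> r * u - L r \<le> M) \<Longrightarrow> young_conj L u \<le> M"
  unfolding young_conj_def by (rule cSUP_least) auto

lemma young_conj_nonneg: "young L \<Longrightarrow> 0 \<le> young_conj L u"
  using young_conj_upper[of L 0 u] young_zero[of L] by simp

lemma young_conj_mono:
  assumes "young L" "u \<le> v"
  shows "young_conj L u \<le> young_conj L v"
proof (rule young_conj_least)
  fix r :: real assume "0 \<le> r"
  then have "r * u \<le> r * v" using assms(2) by (simp add: mult_left_mono)
  then show "r * u - L r \<le> young_conj L v"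
    using young_conj_upper[OF assms(1) \<open>0 \<le> r\<close>, of v] by linarith
qed

lemma young_conj_pos:
  assumes "young L" "0 < a"
  shows "0 < young_conj L a"
proof -
  have "((\<lambda>r. L r / r) \<longlongrightarrow> 0) (at_right 0)" using assms(1) unfolding young_def by blast
  then have "eventually (\<lambda>r. L r / r < a) (at_right 0)" using assms(2) by (rule order_tendstoD)
  then have "eventually (\<lambda>r. L r / r < a \<and> 0 < r) (at_right 0)"
    using eventually_at_right_less[of 0] by (rule eventually_conj)
  then obtain r where "L r / r < a" "0 < r"
    using eventually_happens'[OF trivial_limit_at_right_real] by blast
  then have "0 < r * a - L r" by (simp add: field_simps)
  also have "\<dots> \<le> young_conj L a" using young_conj_upper[OF assms(1)] \<open>0 < r\<close> by simp
  finally show ?thesis .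
qed

lemma young_conj_ratio_le:
  assumes "young L" "0 < s"
  shows "young_conj L (L s / s) \<le> L s"
proof (rule young_conj_least)
  fix r :: real assume r: "0 \<le> r"
  show "r * (L s / s) - L r \<le> L s"
  proof (cases "r \<le> s")
    case True
    then have "r * (L s / s) \<le> s * (L s / s)"
      using young_nonneg[OF assms(1), of s] assms(2) by (intro mult_right_mono) auto
    then show ?thesis using young_nonneg[OF assms(1) r] assms(2) by simp
  next
    case False
    then have "r * (L s / s) \<le> r * (L r / r)"
      using young_ratio_mono[OF assms] r by (intro mult_left_mono) auto
    then show ?thesis using False young_nonneg[OF assms(1), of s] assms(2) by simp
  qed
qed

lemma young_inv_conj_ratio_bounds:
  assumes "young G" "0 < s"
  shows "0 < young_inv G (young_conj G (G s / s)) \<and> young_inv G (young_conj G (G s / s)) \<le> s"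
proof -
  let ?c = "young_conj G (G s / s)"
  have c: "0 < ?c" "?c \<le> G s"
    using young_conj_pos[OF assms(1)] young_pos[OF assms] young_conj_ratio_le[OF assms] assms(2)
    by auto
  obtain r where r: "0 \<le> r" "r \<le> s" "G r = ?c"
    using young_attains[OF assms(1), of ?c s] c assms(2) by auto
  have "young_inv G ?c = r" by (rule young_inv_eqI[OF assms(1) r(1,3)])
  moreover have "r \<noteq> 0" using r(3) c(1) young_zero[OF assms(1)] by auto
  ultimately show ?thesis using r by auto
qed

text \<open>Young's inequality with \<open>a = G s / s\<close> and \<open>e = min \<sigma> 1\<close> gives
  \<open>a t = (e t) (a / e) \<le> Q (e t) + Q\<^sup>* (a / e)\<close>, and \<open>Q (e t) \<le> e Q t\<close>. For large \<open>a / e\<close> the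
  growth hypothesis bounds \<open>Q\<^sup>* (a / e)\<close> by \<open>e P (G\<^sup>-\<^sup>1 (G\<^sup>* a))\<close>, and \<open>G\<^sup>* a \<le> G s\<close>.\<close>
lemma young_ratio_mult_le:
  assumes yP: "young P" and yQ: "young Q" and yG: "young G"
    and growth: "ll (young_conj Q) (P \<circ> young_inv G \<circ> young_conj G)" and "0 < \<sigma>"
  shows "\<exists>K. \<forall>s>0. \<forall>t>0. G s / s * t \<le> \<sigma> * (P s + Q t) + K"
proof -
  define e where "e = min \<sigma> 1"
  have e: "0 < e" "e \<le> 1" "e \<le> \<sigma>" using \<open>0 < \<sigma>\<close> by (auto simp: e_def)
  have "((\<lambda>u. young_conj Q u / P (young_inv G (young_conj G (e * u)))) \<longlongrightarrow> 0) at_top"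
    using growth e(1) unfolding ll_def by simp
  then have "eventually (\<lambda>u. young_conj Q u / P (young_inv G (young_conj G (e * u))) < e) at_top"
    using e(1) by (rule order_tendstoD)
  then obtain M where
    M: "\<And>u. M \<le> u \<Longrightarrow> young_conj Q u / P (young_inv G (young_conj G (e * u))) < e"
    by (auto simp: eventually_at_top_linorder)
  have "G s / s * t \<le> \<sigma> * (P s + Q t) + young_conj Q M" if "0 < s" "0 < t" for s t
  proof -
    define u where "u = G s / s / e"
    have eu: "e * u = G s / s" using e(1) by (simp add: u_def)
    have "(e * t) * u - Q (e * t) \<le> young_conj Q u"
      by (rule young_conj_upper[OF yQ]) (use e that in simp)
    moreover have "Q (e * t) \<le> e * Q t" by (rule young_mult_le[OF yQ]) (use e that in auto)
    moreover have "e * Q t \<le> \<sigma> * Q t"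
      using e(3) young_nonneg[OF yQ, of t] that by (intro mult_right_mono) auto
    moreover have "young_conj Q u \<le> \<sigma> * P s + young_conj Q M"
    proof (cases "M \<le> u")
      case True
      define r where "r = young_inv G (young_conj G (G s / s))"
      have r: "0 < r" "r \<le> s" using young_inv_conj_ratio_bounds[OF yG that(1)] by (auto simp: r_def)
      have "young_conj Q u < e * P r"
        using M[OF True] young_pos[OF yP r(1)] by (simp add: eu r_def divide_less_eq mult.commute)
      also have "\<dots> \<le> \<sigma> * P s"
        using e young_mono[OF yP _ r(2)] young_nonneg[OF yP, of r] r(1) by (intro mult_mono) auto
      finally show ?thesis using young_conj_nonneg[OF yQ, of M] by linarith
    next
      case False
      then have "young_conj Q u \<le> young_conj Q M" by (intro young_conj_mono[OF yQ]) simp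
      moreover have "0 \<le> \<sigma> * P s" using young_nonneg[OF yP, of s] that \<open>0 < \<sigma>\<close> by simp
      ultimately show ?thesis by linarith
    qed
    moreover have "G s / s * t = (e * t) * u" by (simp add: eu[symmetric])
    ultimately show ?thesis unfolding distrib_left by linarith
  qed
  then show ?thesis by blast
qed

section \<open>Terms absorbed by \<open>P(s) + Q(t)\<close>\<close>

definition absorbed :: "(real \<Rightarrow> real) \<Rightarrow> (real \<Rightarrow> real) \<Rightarrow> (real \<Rightarrow> real \<Rightarrow> real) \<Rightarrow> bool" where
  "absorbed P Q X \<longleftrightarrow> (\<forall>\<sigma>>0. \<exists>K. \<forall>s>0. \<forall>t>0. X s t \<le> \<sigma> * (P s + Q t) + K)"

lemma absorbedI:
  "(\<And>\<sigma>. 0 < \<sigma> \<Longrightarrow> \<exists>K. \<forall>s>0. \<forall>t>0. X s t \<le> \<sigma> * (P s + Q t) + K) \<Longrightarrow> absorbed P Q X"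
  unfolding absorbed_def by blast

lemma absorbedD:
  "absorbed P Q X \<Longrightarrow> 0 < \<sigma> \<Longrightarrow> \<exists>K. \<forall>s>0. \<forall>t>0. X s t \<le> \<sigma> * (P s + Q t) + K"
  unfolding absorbed_def by blast

lemma absorbed_add:
  assumes "absorbed P Q X" "absorbed P Q Y"
  shows "absorbed P Q (\<lambda>s t. X s t + Y s t)"
proof (rule absorbedI)
  fix \<sigma> :: real assume "0 < \<sigma>"
  then obtain K1 K2 where
    K1: "\<forall>s>0. \<forall>t>0. X s t \<le> \<sigma> / 2 * (P s + Q t) + K1" and
    K2: "\<forall>s>0. \<forall>t>0. Y s t \<le> \<sigma> / 2 * (P s + Q t) + K2"
    using absorbedD[OF assms(1), of "\<sigma> / 2"] absorbedD[OF assms(2), of "\<sigma> / 2"] by auto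
  have "X s t + Y s t \<le> \<sigma> * (P s + Q t) + (K1 + K2)" if "0 < s" "0 < t" for s t
    using K1[rule_format, OF that] K2[rule_format, OF that] by (simp add: field_simps)
  then have "\<forall>s>0. \<forall>t>0. X s t + Y s t \<le> \<sigma> * (P s + Q t) + (K1 + K2)" by blast
  then show "\<exists>K. \<forall>s>0. \<forall>t>0. X s t + Y s t \<le> \<sigma> * (P s + Q t) + K" by blast
qed

lemma absorbed_cmult:
  assumes "absorbed P Q X" "0 < c"
  shows "absorbed P Q (\<lambda>s t. c * X s t)"
proof (rule absorbedI)
  fix \<sigma> :: real assume "0 < \<sigma>"
  then obtain K where "\<forall>s>0. \<forall>t>0. X s t \<le> \<sigma> / c * (P s + Q t) + K"
    using absorbedD[OF assms(1), of "\<sigma> / c"] assms(2) by auto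
  then have "\<forall>s>0. \<forall>t>0. c * X s t \<le> \<sigma> * (P s + Q t) + c * K"
    using assms(2) by (auto simp: field_simps)
  then show "\<exists>K. \<forall>s>0. \<forall>t>0. c * X s t \<le> \<sigma> * (P s + Q t) + K" by blast
qed

lemma absorbed_mono:
  assumes "absorbed P Q X" "\<And>s t. 0 < s \<Longrightarrow> 0 < t \<Longrightarrow> Y s t \<le> X s t"
  shows "absorbed P Q Y"
  using assms unfolding absorbed_def by (meson order_trans)

lemma absorbed_const:
  assumes "young P" "young Q"
  shows "absorbed P Q (\<lambda>s t. c)"
proof (rule absorbedI)
  fix \<sigma> :: real assume "0 < \<sigma>"
  then have "\<forall>s>0. \<forall>t>0. c \<le> \<sigma> * (P s + Q t) + c"
    using young_nonneg[OF assms(1)] young_nonneg[OF assms(2)] by simp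
  then show "\<exists>K. \<forall>s>0. \<forall>t>0. c \<le> \<sigma> * (P s + Q t) + K" by blast
qed

lemma absorbed_fstI:
  assumes "young Q" "\<And>\<sigma>. 0 < \<sigma> \<Longrightarrow> \<exists>K. \<forall>s>0. F s \<le> \<sigma> * P s + K"
  shows "absorbed P Q (\<lambda>s t. F s)"
proof (rule absorbedI)
  fix \<sigma> :: real assume "0 < \<sigma>"
  then obtain K where K: "\<forall>s>0. F s \<le> \<sigma> * P s + K" using assms(2) by blast
  have "F s \<le> \<sigma> * (P s + Q t) + K" if "0 < s" "0 < t" for s t
  proof -
    have "0 \<le> \<sigma> * Q t" using young_nonneg[OF assms(1), of t] that \<open>0 < \<sigma>\<close> by simp
    then show ?thesis using K that unfolding distrib_left by fastforce
  qed
  then have "\<forall>s>0. \<forall>t>0. F s \<le> \<sigma> * (P s + Q t) + K" by blast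
  then show "\<exists>K. \<forall>s>0. \<forall>t>0. F s \<le> \<sigma> * (P s + Q t) + K" by blast
qed

lemma absorbed_sndI:
  assumes "young P" "\<And>\<sigma>. 0 < \<sigma> \<Longrightarrow> \<exists>K. \<forall>t>0. F t \<le> \<sigma> * Q t + K"
  shows "absorbed P Q (\<lambda>s t. F t)"
proof (rule absorbedI)
  fix \<sigma> :: real assume "0 < \<sigma>"
  then obtain K where K: "\<forall>t>0. F t \<le> \<sigma> * Q t + K" using assms(2) by blast
  have "F t \<le> \<sigma> * (P s + Q t) + K" if "0 < s" "0 < t" for s t
  proof -
    have "0 \<le> \<sigma> * P s" using young_nonneg[OF assms(1), of s] that \<open>0 < \<sigma>\<close> by simp
    then show ?thesis using K that unfolding distrib_left by fastforce
  qed
  then have "\<forall>s>0. \<forall>t>0. F t \<le> \<sigma> * (P s + Q t) + K" by blast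
  then show "\<exists>K. \<forall>s>0. \<forall>t>0. F t \<le> \<sigma> * (P s + Q t) + K" by blast
qed

lemma absorbed_ratio_mult:
  assumes "young P" "young Q" "young G" "ll (young_conj Q) (P \<circ> young_inv G \<circ> young_conj G)"
  shows "absorbed P Q (\<lambda>s t. G s / s * t)"
  using young_ratio_mult_le[OF assms] by (rule absorbedI)

lemma absorbed_ratio:
  assumes "young P" "young Q" "young G" "ll (young_conj Q) (P \<circ> young_inv G \<circ> young_conj G)"
  shows "absorbed P Q (\<lambda>s t. G s / s)"
proof (rule absorbed_fstI[OF assms(2)])
  fix \<sigma> :: real assume "0 < \<sigma>"
  then obtain K where K: "\<forall>s>0. \<forall>t>0. G s / s * t \<le> \<sigma> * (P s + Q t) + K"
    using young_ratio_mult_le[OF assms] by blast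
  have "G s / s \<le> \<sigma> * P s + (\<sigma> * Q 1 + K)" if "0 < s" for s
    using K[rule_format, OF that zero_less_one] by (simp add: distrib_left)
  then have "\<forall>s>0. G s / s \<le> \<sigma> * P s + (\<sigma> * Q 1 + K)" by blast
  then show "\<exists>K. \<forall>s>0. G s / s \<le> \<sigma> * P s + K" by blast
qed

section \<open>Integrating the bounds on the partial derivatives\<close>

definition primitive_powr :: "real \<Rightarrow> real \<Rightarrow> real" where
  "primitive_powr p r = r powr (1 - p) / (1 - p) + r"

lemma has_real_derivative_primitive_powr:
  assumes "0 < r" "p < 1"
  shows "(primitive_powr p has_real_derivative r powr (- p) + 1) (at r)"
proof -
  have "((\<lambda>r. r powr (1 - p) / (1 - p) + r) has_real_derivative
      (1 - p) * r powr (1 - p - 1) / (1 - p) + 1) (at r)"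
    by (intro DERIV_add DERIV_cdivide has_real_derivative_powr DERIV_ident assms(1))
  then show ?thesis using assms(2) unfolding primitive_powr_def[abs_def] by simp
qed

lemma primitive_powr_nonneg: "0 < r \<Longrightarrow> p < 1 \<Longrightarrow> 0 \<le> primitive_powr p r"
  unfolding primitive_powr_def by simp

lemma primitive_powr_le:
  assumes "0 < r" "0 \<le> p" "p < 1"
  shows "primitive_powr p r \<le> (1 / (1 - p) + 1) * (r + 1)"
proof -
  have "r powr (1 - p) \<le> r + 1"
  proof (cases "r \<le> 1")
    case True
    then have "r powr (1 - p) \<le> r powr 0" using assms by (intro powr_mono') auto
    then show ?thesis using assms(1) by simp
  next
    case False
    then have "r powr (1 - p) \<le> r powr 1" using assms by (intro powr_mono) auto
    then show ?thesis using assms(1) by simp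
  qed
  then have "r powr (1 - p) / (1 - p) \<le> (r + 1) / (1 - p)"
    using assms(3) by (intro divide_right_mono) auto
  then show ?thesis unfolding primitive_powr_def by (simp add: algebra_simps)
qed

lemma deriv_le_imp_increment_le:
  fixes F G :: "real \<Rightarrow> real"
  assumes "a \<le> b"
    and "\<And>x. x \<in> {a..b} \<Longrightarrow> (F has_real_derivative F' x) (at x)"
    and "\<And>x. x \<in> {a..b} \<Longrightarrow> (G has_real_derivative G' x) (at x)"
    and "\<And>x. x \<in> {a..b} \<Longrightarrow> F' x \<le> G' x"
  shows "F b - F a \<le> G b - G a"
proof -
  have "G a - F a \<le> G b - F b"
  proof (rule deriv_nonneg_imp_mono[where g = "\<lambda>x. G x - F x" and g' = "\<lambda>x. G' x - F' x"])
    show "((\<lambda>x. G x - F x) has_real_derivative G' x - F' x) (at x)" if "x \<in> {a..b}" for x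
      by (intro DERIV_diff assms(2,3) that)
  qed (use assms in auto)
  then show ?thesis by simp
qed

lemma increment_le_primitive_powr:
  fixes F :: "real \<Rightarrow> real"
  assumes "0 < a" "a \<le> b" "p < 1" "0 \<le> c" "0 \<le> d"
    and "\<And>r. r \<in> {a..b} \<Longrightarrow> (F has_real_derivative F' r) (at r)"
    and "\<And>r. r \<in> {a..b} \<Longrightarrow> F' r \<le> c * (r powr (- p) + 1) + d"
  shows "F b - F a \<le> c * primitive_powr p b + d * b"
proof -
  have "F b - F a \<le> (c * primitive_powr p b + d * b) - (c * primitive_powr p a + d * a)"
    using assms(1,3,6,7)
    by (intro deriv_le_imp_increment_le[OF assms(2), where G' = "\<lambda>r. c * (r powr (- p) + 1) + d"])
       (auto intro!: derivative_eq_intros has_real_derivative_primitive_powr)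
  moreover have "0 \<le> c * primitive_powr p a + d * a"
    using assms primitive_powr_nonneg[OF assms(1,3)] by simp
  ultimately show ?thesis by linarith
qed

lemma tendsto_diagonal_at_right:
  fixes F :: "real \<Rightarrow> real \<Rightarrow> 'a::topological_space"
  assumes "((\<lambda>(s, t). F s t) \<longlongrightarrow> l) (at (0, 0) within {0<..} \<times> {0<..})"
  shows "((\<lambda>e. F e e) \<longlongrightarrow> l) (at_right 0)"
proof -
  have "filterlim (\<lambda>e::real. (e, e)) (at (0, 0) within {0<..} \<times> {0<..}) (at_right 0)"
    unfolding filterlim_at
    by (auto intro!: tendsto_Pair tendsto_ident_at eventually_mono[OF eventually_at_right_less])
  from filterlim_compose[OF assms this] show ?thesis by simp
qed

lemma bounds_from_diagonal_increments:
  fixes F :: "real \<Rightarrow> real \<Rightarrow> real"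
  assumes "((\<lambda>(s, t). F s t) \<longlongrightarrow> 0) (at (0, 0) within {0<..} \<times> {0<..})"
    and "eventually (\<lambda>e. a \<le> F s t - F e e \<and> F s t - F e e \<le> b) (at_right 0)"
  shows "a \<le> F s t \<and> F s t \<le> b"
proof -
  have "((\<lambda>e. F s t - F e e) \<longlongrightarrow> F s t - 0) (at_right 0)"
    by (intro tendsto_diff tendsto_const tendsto_diagonal_at_right[OF assms(1)])
  then show ?thesis
    using assms(2) by (auto intro: tendsto_lowerbound tendsto_upperbound elim: eventually_mono)
qed

lemma increment_fst_bounds:
  fixes F f :: "real \<Rightarrow> real \<Rightarrow> real"
  assumes "young U1" "0 < hx" "0 < C" "\<alpha> < 1"
    and f_pos: "\<forall>s>0. \<forall>t>0. 0 < f s t"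
    and F_ds: "\<forall>s>0. \<forall>t>0. ((\<lambda>s'. F s' t) has_real_derivative hx * f s t) (at s)"
    and f_bound: "\<forall>s>0. \<forall>t>0. f s t \<le> C * ((s powr (-\<alpha>) + 1) * (U2 t / t + 1) + U1 s / s)"
    and "0 < e" "e \<le> s" "U2 e / e \<le> 1"
  shows "0 \<le> F s e - F e e \<and> F s e - F e e \<le> hx * (C * (2 * primitive_powr \<alpha> s + U1 s))"
proof
  have deriv: "((\<lambda>r. F r e) has_real_derivative hx * f r e) (at r)" if "r \<in> {e..s}" for r
    using F_ds that \<open>0 < e\<close> by auto
  have "F e e \<le> F s e"
    using f_pos \<open>0 < e\<close> \<open>0 < hx\<close> \<open>e \<le> s\<close>
    by (intro deriv_nonneg_imp_mono[OF deriv]) (auto intro!: mult_nonneg_nonneg less_imp_le)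
  then show "0 \<le> F s e - F e e" by simp
  have "hx * f r e \<le> (hx * C * 2) * (r powr (-\<alpha>) + 1) + hx * C * (U1 s / s)"
    if "r \<in> {e..s}" for r
  proof -
    have r: "0 < r" "r \<le> s" using that \<open>0 < e\<close> by auto
    have "(r powr (-\<alpha>) + 1) * (U2 e / e + 1) \<le> (r powr (-\<alpha>) + 1) * 2"
      using \<open>U2 e / e \<le> 1\<close> by (intro mult_left_mono) auto
    moreover have "U1 r / r \<le> U1 s / s" by (rule young_ratio_mono[OF assms(1) r])
    ultimately have "C * ((r powr (-\<alpha>) + 1) * (U2 e / e + 1) + U1 r / r)
        \<le> C * ((r powr (-\<alpha>) + 1) * 2 + U1 s / s)"
      using \<open>0 < C\<close> by (intro mult_left_mono) auto
    then have "f r e \<le> C * ((r powr (-\<alpha>) + 1) * 2 + U1 s / s)"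
      using f_bound r(1) \<open>0 < e\<close> by force
    then have "hx * f r e \<le> hx * (C * ((r powr (-\<alpha>) + 1) * 2 + U1 s / s))"
      using \<open>0 < hx\<close> by simp
    then show ?thesis by (simp add: algebra_simps)
  qed
  then have "F s e - F e e \<le> (hx * C * 2) * primitive_powr \<alpha> s + hx * C * (U1 s / s) * s"
    using assms(2,3) young_nonneg[OF assms(1), of s] \<open>0 < e\<close> \<open>e \<le> s\<close>
    by (intro increment_le_primitive_powr[OF \<open>0 < e\<close> \<open>e \<le> s\<close> \<open>\<alpha> < 1\<close> _ _ deriv]) auto
  then show "F s e - F e e \<le> hx * (C * (2 * primitive_powr \<alpha> s + U1 s))"
    using \<open>0 < e\<close> \<open>e \<le> s\<close> by (simp add: algebra_simps)
qed

lemma increment_snd_bounds: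
  fixes F g :: "real \<Rightarrow> real \<Rightarrow> real"
  assumes "young G1" "young G2" "0 < kx" "0 < C" "\<beta> < 1"
    and g_pos: "\<forall>s>0. \<forall>t>0. 0 < g s t"
    and F_dt: "\<forall>s>0. \<forall>t>0. ((\<lambda>t'. F s t') has_real_derivative kx * g s t) (at t)"
    and g_bound: "\<forall>s>0. \<forall>t>0. g s t \<le> C * ((t powr (-\<beta>) + 1) * (G1 s / s + 1) + G2 t / t)"
    and "0 < s" "0 < e" "e \<le> t"
  shows "0 \<le> F s t - F s e \<and>
    F s t - F s e \<le> kx * (C * ((G1 s / s + 1) * primitive_powr \<beta> t + G2 t))"
proof
  have deriv: "((\<lambda>r. F s r) has_real_derivative kx * g s r) (at r)" if "r \<in> {e..t}" for r
    using F_dt that \<open>0 < s\<close> \<open>0 < e\<close> by auto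
  have "F s e \<le> F s t"
    using g_pos \<open>0 < s\<close> \<open>0 < e\<close> \<open>0 < kx\<close> \<open>e \<le> t\<close>
    by (intro deriv_nonneg_imp_mono[OF deriv]) (auto intro!: mult_nonneg_nonneg less_imp_le)
  then show "0 \<le> F s t - F s e" by simp
  have "kx * g s r \<le> (kx * C * (G1 s / s + 1)) * (r powr (-\<beta>) + 1) + kx * C * (G2 t / t)"
    if "r \<in> {e..t}" for r
  proof -
    have r: "0 < r" "r \<le> t" using that \<open>0 < e\<close> by auto
    have "G2 r / r \<le> G2 t / t" by (rule young_ratio_mono[OF assms(2) r])
    then have "C * ((r powr (-\<beta>) + 1) * (G1 s / s + 1) + G2 r / r)
        \<le> C * ((r powr (-\<beta>) + 1) * (G1 s / s + 1) + G2 t / t)"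
      using \<open>0 < C\<close> by (intro mult_left_mono) auto
    then have "g s r \<le> C * ((r powr (-\<beta>) + 1) * (G1 s / s + 1) + G2 t / t)"
      using g_bound r(1) \<open>0 < s\<close> by force
    then have "kx * g s r \<le> kx * (C * ((r powr (-\<beta>) + 1) * (G1 s / s + 1) + G2 t / t))"
      using \<open>0 < kx\<close> by simp
    then show ?thesis using \<open>0 < s\<close> by (simp add: field_simps)
  qed
  then have "F s t - F s e
      \<le> (kx * C * (G1 s / s + 1)) * primitive_powr \<beta> t + kx * C * (G2 t / t) * t"
    using assms(3,4) young_nonneg[OF assms(1), of s] young_nonneg[OF assms(2), of t]
      \<open>0 < s\<close> \<open>0 < e\<close> \<open>e \<le> t\<close>
    by (intro increment_le_primitive_powr[OF \<open>0 < e\<close> \<open>e \<le> t\<close> \<open>\<beta> < 1\<close> _ _ deriv]) auto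
  then show "F s t - F s e \<le> kx * (C * ((G1 s / s + 1) * primitive_powr \<beta> t + G2 t))"
    using \<open>0 < e\<close> \<open>e \<le> t\<close> by (simp add: algebra_simps)
qed

lemma bounds_from_partial_derivatives:
  fixes F f g :: "real \<Rightarrow> real \<Rightarrow> real"
  assumes "young U1" "young U2" "young G1" "young G2"
    and "0 < hx" "0 < kx" "0 < C" "\<alpha> < 1" "\<beta> < 1"
    and f_pos: "\<forall>s>0. \<forall>t>0. 0 < f s t" and g_pos: "\<forall>s>0. \<forall>t>0. 0 < g s t"
    and F_ds: "\<forall>s>0. \<forall>t>0. ((\<lambda>s'. F s' t) has_real_derivative hx * f s t) (at s)"
    and F_dt: "\<forall>s>0. \<forall>t>0. ((\<lambda>t'. F s t') has_real_derivative kx * g s t) (at t)"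
    and F_lim: "((\<lambda>(s, t). F s t) \<longlongrightarrow> 0) (at (0, 0) within {0<..} \<times> {0<..})"
    and f_bound: "\<forall>s>0. \<forall>t>0. f s t \<le> C * ((s powr (-\<alpha>) + 1) * (U2 t / t + 1) + U1 s / s)"
    and g_bound: "\<forall>s>0. \<forall>t>0. g s t \<le> C * ((t powr (-\<beta>) + 1) * (G1 s / s + 1) + G2 t / t)"
    and "0 < s" "0 < t"
  shows "0 \<le> F s t \<and> F s t \<le> hx * (C * (2 * primitive_powr \<alpha> s + U1 s))
    + kx * (C * ((G1 s / s + 1) * primitive_powr \<beta> t + G2 t))"
proof (rule bounds_from_diagonal_increments[OF F_lim])
  have "((\<lambda>e. U2 e / e) \<longlongrightarrow> 0) (at_right 0)" using assms(2) unfolding young_def by blast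
  then have "eventually (\<lambda>e. U2 e / e < 1) (at_right 0)" by (rule order_tendstoD) simp
  moreover have "eventually (\<lambda>e. e \<in> {0<..<min s t}) (at_right 0)"
    using \<open>0 < s\<close> \<open>0 < t\<close> by (intro eventually_at_right_real) simp
  ultimately show "eventually (\<lambda>e. 0 \<le> F s t - F e e \<and> F s t - F e e
      \<le> hx * (C * (2 * primitive_powr \<alpha> s + U1 s))
        + kx * (C * ((G1 s / s + 1) * primitive_powr \<beta> t + G2 t))) (at_right 0)"
  proof eventually_elim
    case (elim e)
    then have e: "0 < e" "e \<le> s" "e \<le> t" "U2 e / e \<le> 1" by auto
    show ?case
      using increment_fst_bounds[OF assms(1,5,7,8) f_pos F_ds f_bound e(1,2,4)]
        increment_snd_bounds[OF assms(3,4,6,7,9) g_pos F_dt g_bound \<open>0 < s\<close> e(1,3)]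
      by linarith
  qed
qed

lemma absorbed_primitive_fst:
  assumes "young P" "young Q" "young U" "ll U P" "0 \<le> \<alpha>" "\<alpha> < 1" "0 < C"
  shows "absorbed P Q (\<lambda>s t. C * (2 * primitive_powr \<alpha> s + U s))"
proof -
  define c where "c = 2 * (1 / (1 - \<alpha>) + 1)"
  have "0 < c" using \<open>\<alpha> < 1\<close> by (simp add: c_def add_pos_pos)
  have "absorbed P Q (\<lambda>s t. s)"
    using young_superlinear[OF assms(1)] by (intro absorbed_fstI[OF assms(2)]) (meson less_imp_le)
  moreover have "absorbed P Q (\<lambda>s t. U s)"
    by (intro absorbed_fstI[OF assms(2)] ll_imp_bound[OF assms(3,1,4)])
  ultimately have "absorbed P Q (\<lambda>s t. C * (c * s + c + U s))"
    by (intro absorbed_cmult absorbed_add absorbed_const assms(1,2,7) \<open>0 < c\<close>)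
  then show ?thesis
  proof (rule absorbed_mono)
    fix s t :: real assume "0 < s"
    have "primitive_powr \<alpha> s \<le> (1 / (1 - \<alpha>) + 1) * (s + 1)"
      by (rule primitive_powr_le[OF \<open>0 < s\<close> assms(5,6)])
    moreover have "c * s + c = 2 * ((1 / (1 - \<alpha>) + 1) * (s + 1))"
      by (simp add: c_def algebra_simps add_divide_distrib)
    ultimately have "2 * primitive_powr \<alpha> s \<le> c * s + c" by linarith
    then show "C * (2 * primitive_powr \<alpha> s + U s) \<le> C * (c * s + c + U s)"
      using \<open>0 < C\<close> by simp
  qed
qed

lemma absorbed_primitive_snd:
  assumes "young P" "young Q" "young G" "young G2" "ll G2 Q"
    and growth: "ll (young_conj Q) (P \<circ> young_inv G \<circ> young_conj G)"
    and "0 \<le> \<beta>" "\<beta> < 1" "0 < C"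
  shows "absorbed P Q (\<lambda>s t. C * ((G s / s + 1) * primitive_powr \<beta> t + G2 t))"
proof -
  define c where "c = 1 / (1 - \<beta>) + 1"
  have "0 < c" using \<open>\<beta> < 1\<close> by (simp add: c_def add_pos_pos)
  have "absorbed P Q (\<lambda>s t. t)"
    using young_superlinear[OF assms(2)] by (intro absorbed_sndI[OF assms(1)]) (meson less_imp_le)
  moreover have "absorbed P Q (\<lambda>s t. G2 t)"
    by (intro absorbed_sndI[OF assms(1)] ll_imp_bound[OF assms(4,2,5)])
  moreover note absorbed_ratio_mult[OF assms(1-3) growth] absorbed_ratio[OF assms(1-3) growth]
  ultimately have "absorbed P Q (\<lambda>s t. C * (c * (G s / s * t + G s / s + t + 1) + G2 t))"
    by (intro absorbed_cmult absorbed_add absorbed_const assms(1,2,9) \<open>0 < c\<close>)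
  then show ?thesis
  proof (rule absorbed_mono)
    fix s t :: real assume "0 < s" "0 < t"
    then have "(G s / s + 1) * primitive_powr \<beta> t \<le> (G s / s + 1) * (c * (t + 1))"
      using primitive_powr_le[OF _ assms(7,8)] young_nonneg[OF assms(3), of s]
      by (intro mult_left_mono) (auto simp: c_def)
    also have "\<dots> = c * (G s / s * t + G s / s + t + 1)" by (simp add: algebra_simps)
    finally show "C * ((G s / s + 1) * primitive_powr \<beta> t + G2 t)
        \<le> C * (c * (G s / s * t + G s / s + t + 1) + G2 t)"
      using \<open>0 < C\<close> by simp
  qed
qed

theorem lemma4p1:
  fixes \<Phi> \<Psi> \<phi> \<psi> :: "real \<Rightarrow> real"
    and f g :: "real \<Rightarrow> real \<Rightarrow> real"
    and h k :: "real ^ 'n \<Rightarrow> real"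
    and H :: "real ^ 'n \<Rightarrow> real \<Rightarrow> real \<Rightarrow> real"
    and \<Upsilon>1 \<Upsilon>2 \<Gamma>1 \<Gamma>2 :: "real \<Rightarrow> real"
    and C \<alpha> \<beta> :: real
  assumes dimN: "CARD('n) \<ge> 2"
    and young_Phi: "young \<Phi>" and young_Psi: "young \<Psi>"
    and phi_def: "\<forall>t>0. (\<Phi> has_real_derivative \<phi> t) (at t)"
    and psi_def: "\<forall>t>0. (\<Psi> has_real_derivative \<psi> t) (at t)"
    (* (H1) *)
    and C2_Phi: "C2_pos \<Phi> \<phi>" and C2_Psi: "C2_pos \<Psi> \<psi>"
    and idx_phi: "index_bounds \<phi>" and idx_psi: "index_bounds \<psi>"
    and bdd_Phi: "bdd_above ((\<lambda>t. t * deriv \<Phi> t / \<Phi> t) ` {0<..})"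
    and bdd_Psi: "bdd_above ((\<lambda>t. t * deriv \<Psi> t / \<Psi> t) ` {0<..})"
    and sN: "max (s_index \<Phi>) (s_index \<Psi>) < real CARD('n)"
    (* f, g, h, k *)
    and f_cont: "continuous_on ({0<..} \<times> {0<..}) (\<lambda>(s, t). f s t)"
    and g_cont: "continuous_on ({0<..} \<times> {0<..}) (\<lambda>(s, t). g s t)"
    and f_pos: "\<forall>s>0. \<forall>t>0. f s t > 0"
    and g_pos: "\<forall>s>0. \<forall>t>0. g s t > 0"
    and h_meas: "h \<in> borel_measurable lebesgue" and k_meas: "k \<in> borel_measurable lebesgue"
    and h_pos: "\<forall>x. h x > 0" and k_pos: "\<forall>x. k x > 0"
    (* (H2)(i) *)
    and H_meas: "\<forall>s>0. \<forall>t>0. (\<lambda>x. H x s t) \<in> borel_measurable lebesgue"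
    and H_ds: "\<forall>x. \<forall>s>0. \<forall>t>0. ((\<lambda>s'. H x s' t) has_real_derivative h x * f s t) (at s)"
    and H_dt: "\<forall>x. \<forall>s>0. \<forall>t>0. ((\<lambda>t'. H x s t') has_real_derivative k x * g s t) (at t)"
    and H_00: "\<forall>x. ((\<lambda>(s, t). H x s t) \<longlongrightarrow> 0) (at (0, 0) within ({0<..} \<times> {0<..}))"
    (* (H2)(ii) *)
    and young_U1: "young \<Upsilon>1" and young_U2: "young \<Upsilon>2"
    and young_G1: "young \<Gamma>1" and young_G2: "young \<Gamma>2"
    and diff_U1: "\<forall>t>0. \<Upsilon>1 differentiable (at t)"
    and diff_U2: "\<forall>t>0. \<Upsilon>2 differentiable (at t)"
    and diff_G1: "\<forall>t>0. \<Gamma>1 differentiable (at t)"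
    and diff_G2: "\<forall>t>0. \<Gamma>2 differentiable (at t)"
    and U1_Phi: "ll \<Upsilon>1 \<Phi>" and G2_Psi: "ll \<Gamma>2 \<Psi>"
    and C_pos: "C > 0" and \<alpha>: "0 < \<alpha>" "\<alpha> < 1" and \<beta>: "0 < \<beta>" "\<beta> < 1"
    and f_bound: "\<forall>s>0. \<forall>t>0. f s t \<le>
        C * ((s powr (-\<alpha>) + 1) * (\<Upsilon>2 t / t + 1) + \<Upsilon>1 s / s)"
    and g_bound: "\<forall>s>0. \<forall>t>0. g s t \<le>
        C * ((t powr (-\<beta>) + 1) * (\<Gamma>1 s / s + 1) + \<Gamma>2 t / t)"
    and conj_Phi: "ll (young_conj \<Phi>) (\<Psi> \<circ> young_inv \<Upsilon>2 \<circ> young_conj \<Upsilon>2)"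
    and conj_Psi: "ll (young_conj \<Psi>) (\<Phi> \<circ> young_inv \<Gamma>1 \<circ> young_conj \<Gamma>1)"
  shows "\<forall>\<sigma>>0. \<exists>C\<sigma>>0. \<forall>x. \<forall>s>0. \<forall>t>0.
           \<bar>H x s t\<bar> \<le> (h x + k x) * (\<sigma> * (\<Phi> s + \<Psi> t) + C\<sigma>)"
proof (intro allI impI)
  \<comment> \<open>Only (H2) enters, and of the two growth conditions on conjugates only the one for \<open>\<Psi>\<close>.\<close>
  fix \<sigma> :: real assume "0 < \<sigma>"
  define A where "A s = C * (2 * primitive_powr \<alpha> s + \<Upsilon>1 s)" for s
  define B where "B s t = C * ((\<Gamma>1 s / s + 1) * primitive_powr \<beta> t + \<Gamma>2 t)" for s t
  obtain KA where KA: "\<forall>s>0. \<forall>t>0. A s \<le> \<sigma> * (\<Phi> s + \<Psi> t) + KA"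
    using absorbedD[OF absorbed_primitive_fst[OF young_Phi young_Psi young_U1 U1_Phi _ \<alpha>(2) C_pos]]
      \<open>0 < \<sigma>\<close> \<alpha>(1) unfolding A_def by fastforce
  obtain KB where KB: "\<forall>s>0. \<forall>t>0. B s t \<le> \<sigma> * (\<Phi> s + \<Psi> t) + KB"
    using absorbedD[OF absorbed_primitive_snd[OF young_Phi young_Psi young_G1 young_G2 G2_Psi
        conj_Psi _ \<beta>(2) C_pos]] \<open>0 < \<sigma>\<close> \<beta>(1) unfolding B_def by fastforce
  define K where "K = max (max KA KB) 1"
  have "\<bar>H x s t\<bar> \<le> (h x + k x) * (\<sigma> * (\<Phi> s + \<Psi> t) + K)" if "0 < s" "0 < t" for x s t
  proof -
    have H: "0 \<le> H x s t \<and> H x s t \<le> h x * A s + k x * B s t"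
      unfolding A_def B_def
      by (rule bounds_from_partial_derivatives[OF young_U1 young_U2 young_G1 young_G2
            h_pos[rule_format] k_pos[rule_format] C_pos \<alpha>(2) \<beta>(2) f_pos g_pos
            spec[OF H_ds] spec[OF H_dt] spec[OF H_00] f_bound g_bound that])
    have "A s \<le> \<sigma> * (\<Phi> s + \<Psi> t) + K" "B s t \<le> \<sigma> * (\<Phi> s + \<Psi> t) + K"
      using KA KB that unfolding K_def by fastforce+
    then have "h x * A s + k x * B s t \<le> (h x + k x) * (\<sigma> * (\<Phi> s + \<Psi> t) + K)"
      using h_pos k_pos by (simp add: distrib_right add_mono less_imp_le)
    then show ?thesis using H by simp
  qed
  then show "\<exists>C\<sigma>>0. \<forall>x. \<forall>s>0. \<forall>t>0. \<bar>H x s t\<bar> \<le> (h x + k x) * (\<sigma> * (\<Phi> s + \<Psi> t) + C\<sigma>)"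
    by (intro exI[of _ K]) (auto simp: K_def)
qed

end
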